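(* Let $A\subset\mathbb{R}$ be a finite set. Then there exists a subset $A'\subseteq A$ with $|A'|\geq |A|/2$ such that for all $a\in A'$, $$|(A+A)(A+a)|\gg \frac{|A|^{5/3}}{(\log|A|)^{1/3}},$$ where $(A+A)(A+a)=\{(b+c)(d+a): b,c,d\in A\}$.
   Context: $X\gg Y$ means $X\geq cY$ for some absolute constant $c>0$ (independent of $A$ and $a$). Logarithms are to base 2. *)

theory Defs
  imports Complex_Main
begin

definition sumprod_set :: "real set \<Rightarrow> real \<Rightarrow> real set" where
  "sumprod_set A a = {(b + c) * (d + a) | b c d. b \<in> A \<and> c \<in> A \<and> d \<in> A}"

end

theory Submission
  imports Defs "HOL-Analysis.Convex"
begin

text \<open>
  Fix \<open>a \<in> A\<close> and let \<open>Q(a)\<close> count the solutions of \<open>(b + c)(d + a) = (b' + c')(d' + a)\<close> in \<open>A\<close>.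
  By Cauchy--Schwarz, \<open>|A|\<^sup>6 \<le> |(A + A)(A + a)| Q(a)\<close>. Apart from \<open>O(|A|\<^sup>4)\<close> solutions with value
  \<open>0\<close>, a solution is split by its ratio \<open>r = (d' + a)/(d + a) = (b + c)/(b' + c')\<close> into a solution of
  \<open>b + c = r (b' + c')\<close> and a point \<open>(d, d')\<close> of \<open>A \<times> A\<close> on the line \<open>y = r x + (r - 1) a\<close>. The first
  kind is bounded by the energy \<open>\<Sum>\<^sub>u i(r, u)\<^sup>2\<close> of the incidence numbers of \<open>A \<times> A\<close> with the lines
  of slope \<open>r\<close>, the second by a single incidence number. Summing over \<open>a\<close>, cutting the second factor
  at a threshold \<open>M\<close> and controlling all moments by the grid incidence bound "lines containing at
  least \<open>T\<close> points of \<open>A \<times> A\<close> carry \<open>O(|A|\<^sup>4/T\<^sup>2)\<close> incidences" (proved with a cell decomposition of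
  the grid) gives \<open>\<Sum>\<^sub>a Q(a) = O(|A|\<^sup>5 M)\<close> for \<open>M = (|A| (1 + ln |A|))\<^bsup>1/3\<^esup>\<close>. Hence
  \<open>Q(a) = O(|A|\<^sup>4 M)\<close> for at least half of the \<open>a \<in> A\<close>, and for these \<open>|(A + A)(A + a)| \<ge> |A|\<^sup>2/O(M)\<close>.
\<close>

section \<open>Lines through a Cartesian square\<close>

text \<open>The line \<open>y = m x + c\<close> is encoded as the pair \<open>(m, c)\<close>; vertical lines never occur.\<close>

definition line_points :: "'a::linordered_field set \<Rightarrow> 'a \<times> 'a \<Rightarrow> ('a \<times> 'a) set" where
  "line_points A l = {p \<in> A \<times> A. snd p = fst l * fst p + snd l}"

definition incidences :: "'a::linordered_field set \<Rightarrow> 'a \<times> 'a \<Rightarrow> nat" where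
  "incidences A l = card (line_points A l)"

lemma line_points_subset: "line_points A l \<subseteq> A \<times> A"
  unfolding line_points_def by auto

lemma finite_line_points: "finite A \<Longrightarrow> finite (line_points A l)"
  using finite_subset[OF line_points_subset] by blast

lemma incidences_le_card:
  assumes "finite A"
  shows "incidences A l \<le> card A"
proof -
  have "line_points A l \<subseteq> (\<lambda>x. (x, fst l * x + snd l)) ` A" unfolding line_points_def by auto
  then have "incidences A l \<le> card ((\<lambda>x. (x, fst l * x + snd l)) ` A)"
    unfolding incidences_def by (intro card_mono) (use assms in auto)
  also have "\<dots> \<le> card A" by (rule card_image_le[OF assms])
  finally show ?thesis .
qed

lemma line_eqI:
  assumes "p \<in> line_points A l1" "q \<in> line_points A l1"
    and "p \<in> line_points A l2" "q \<in> line_points A l2" and "p \<noteq> q"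
  shows "l1 = l2"
proof -
  obtain m1 c1 m2 c2 where l: "l1 = (m1, c1)" "l2 = (m2, c2)" by fastforce
  obtain x1 y1 x2 y2 where pq: "p = (x1, y1)" "q = (x2, y2)" by fastforce
  have e: "y1 = m1 * x1 + c1" "y2 = m1 * x2 + c1" "y1 = m2 * x1 + c2" "y2 = m2 * x2 + c2"
    using assms unfolding line_points_def l pq by auto
  then have "x1 \<noteq> x2" using assms(5) pq by auto
  moreover have "(m1 - m2) * (x1 - x2) = 0" using e by (simp add: algebra_simps)
  ultimately have "m1 = m2" by simp
  then show ?thesis using e l by simp
qed

lemma card_distinct_pairs:
  assumes "finite S"
  shows "card {pq \<in> S \<times> S. fst pq \<noteq> snd pq} = card S * (card S - 1)"
proof -
  have e: "{pq \<in> S \<times> S. fst pq \<noteq> snd pq} = S \<times> S - (\<lambda>x. (x, x)) ` S" by auto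
  have "card ((\<lambda>x. (x, x)) ` S) = card S" by (rule card_image) (auto simp: inj_on_def)
  then show ?thesis
    unfolding e using assms by (subst card_Diff_subset) (auto simp: card_cartesian_product algebra_simps)
qed

lemma card_Sigma_line_pairs_le:
  assumes "finite Q"
    and "\<And>l. l \<in> L \<Longrightarrow> P l \<subseteq> {pq \<in> line_points A l \<times> line_points A l. fst pq \<noteq> snd pq} \<inter> Q"
  shows "card (SIGMA l:L. P l) \<le> card Q"
proof (rule card_inj_on_le[of snd _ Q])
  show "inj_on snd (SIGMA l:L. P l)"
  proof (rule inj_onI)
    fix x y assume x: "x \<in> (SIGMA l:L. P l)" and y: "y \<in> (SIGMA l:L. P l)" and "snd x = snd y"
    obtain l1 p q l2 where xy: "x = (l1, (p, q))" "y = (l2, (p, q))"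
      using \<open>snd x = snd y\<close> by (cases x, cases y) auto
    then have "p \<in> line_points A l1" "q \<in> line_points A l1" "p \<in> line_points A l2"
      "q \<in> line_points A l2" "p \<noteq> q"
      using x y assms(2)[of l1] assms(2)[of l2] xy by auto
    then have "l1 = l2" by (rule line_eqI)
    then show "x = y" using xy by simp
  qed
next
  show "snd ` (SIGMA l:L. P l) \<subseteq> Q" using assms(2) by force
qed (rule assms(1))

lemma sum_incidences_pairs_le:
  assumes "finite A" "finite L"
  shows "(\<Sum>l\<in>L. incidences A l * (incidences A l - 1)) \<le> card A ^ 4"
proof -
  have "(\<Sum>l\<in>L. incidences A l * (incidences A l - 1))
      = card (SIGMA l:L. {pq \<in> line_points A l \<times> line_points A l. fst pq \<noteq> snd pq})"
    using assms by (simp add: incidences_def card_distinct_pairs finite_line_points)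
  also have "\<dots> \<le> card ((A \<times> A) \<times> (A \<times> A))"
    by (rule card_Sigma_line_pairs_le) (use assms(1) line_points_subset[of A] in auto)
  also have "\<dots> = card A ^ 4" by (simp add: card_cartesian_product power4_eq_xxxx)
  finally show ?thesis .
qed

lemma sum_incidences_horizontal_le:
  assumes "finite A" "finite L"
  shows "(\<Sum>l\<in>{l\<in>L. fst l = 0}. incidences A l) \<le> card A ^ 2"
proof -
  let ?S = "SIGMA l:{l\<in>L. fst l = 0}. line_points A l"
  have "(\<Sum>l\<in>{l\<in>L. fst l = 0}. incidences A l) = card ?S"
    using assms by (simp add: incidences_def finite_line_points)
  also have "\<dots> \<le> card (A \<times> A)"
  proof (rule card_inj_on_le[of snd])
    show "inj_on snd ?S" by (rule inj_onI) (auto simp: line_points_def prod_eq_iff)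
  qed (use assms in \<open>auto simp: line_points_def\<close>)
  finally show ?thesis by (simp add: card_cartesian_product power2_eq_square)
qed

section \<open>A cell decomposition bound for rich lines\<close>

definition rank_in :: "'a::linorder set \<Rightarrow> 'a \<Rightarrow> nat" where
  "rank_in A x = card {z \<in> A. z < x}"

lemma rank_in_strict_mono:
  assumes "finite A" "x \<in> A" "y \<in> A" "x < y"
  shows "rank_in A x < rank_in A y"
proof -
  have "{z \<in> A. z < x} \<subset> {z \<in> A. z < y}" using assms by auto
  then show ?thesis unfolding rank_in_def by (intro psubset_card_mono) (use assms in auto)
qed

lemma rank_in_less_card:
  assumes "finite A" "x \<in> A"
  shows "rank_in A x < card A"
proof -
  have "{z \<in> A. z < x} \<subset> A" using assms by auto
  then show ?thesis unfolding rank_in_def by (intro psubset_card_mono) (use assms in auto)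
qed

lemma inj_on_rank_in: "finite A \<Longrightarrow> inj_on (rank_in A) A"
  by (rule inj_onI) (metis less_irrefl linorder_cases rank_in_strict_mono)

definition grid_cell :: "nat \<Rightarrow> 'a::linorder set \<Rightarrow> 'a \<times> 'a \<Rightarrow> nat \<times> nat" where
  "grid_cell G A p = (rank_in A (fst p) div G, rank_in A (snd p) div G)"

definition same_cell_pairs :: "nat \<Rightarrow> 'a::linorder set \<Rightarrow> ('a \<times> 'a) set \<Rightarrow> (('a \<times> 'a) \<times> ('a \<times> 'a)) set" where
  "same_cell_pairs G A S =
     {pq \<in> S \<times> S. fst pq \<noteq> snd pq \<and> grid_cell G A (fst pq) = grid_cell G A (snd pq)}"

lemma card_rank_block_le:
  assumes "finite A" "G \<ge> 1"
  shows "card {x\<in>A. rank_in A x div G = b} \<le> G"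
proof -
  have "card {x\<in>A. rank_in A x div G = b} = card (rank_in A ` {x\<in>A. rank_in A x div G = b})"
    by (rule card_image[symmetric]) (rule inj_on_subset[OF inj_on_rank_in[OF assms(1)]], auto)
  also have "\<dots> \<le> card {b * G..<b * G + G}"
  proof (rule card_mono)
    show "rank_in A ` {x\<in>A. rank_in A x div G = b} \<subseteq> {b * G..<b * G + G}"
    proof
      fix k assume "k \<in> rank_in A ` {x\<in>A. rank_in A x div G = b}"
      then have "k div G = b" by auto
      moreover have "k div G * G + k mod G = k" by (rule div_mult_mod_eq)
      moreover have "k mod G < G" using assms(2) by simp
      ultimately show "k \<in> {b * G..<b * G + G}" by auto
    qed
  qed auto
  finally show ?thesis by simp
qed

lemma card_same_cell_pairs_le:
  assumes "finite A" "G \<ge> 1"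
  shows "card (same_cell_pairs G A (A \<times> A)) \<le> card A ^ 2 * G ^ 2"
proof -
  have cell: "card {q \<in> A \<times> A. grid_cell G A q = c} \<le> G * G" for c
  proof -
    have "{q \<in> A \<times> A. grid_cell G A q = c}
        = {x\<in>A. rank_in A x div G = fst c} \<times> {y\<in>A. rank_in A y div G = snd c}"
      unfolding grid_cell_def by (cases c) auto
    then show ?thesis using card_rank_block_le[OF assms]
      by (simp add: card_cartesian_product mult_le_mono)
  qed
  have "same_cell_pairs G A (A \<times> A) \<subseteq> (SIGMA p:A \<times> A. {q \<in> A \<times> A. grid_cell G A q = grid_cell G A p})"
    unfolding same_cell_pairs_def by auto
  then have "card (same_cell_pairs G A (A \<times> A))
      \<le> card (SIGMA p:A \<times> A. {q \<in> A \<times> A. grid_cell G A q = grid_cell G A p})"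
    by (rule card_mono[rotated]) (use assms(1) in simp)
  also have "\<dots> = (\<Sum>p\<in>A \<times> A. card {q \<in> A \<times> A. grid_cell G A q = grid_cell G A p})"
    using assms(1) by simp
  also have "\<dots> \<le> (\<Sum>p\<in>A \<times> A. G * G)" by (rule sum_mono) (rule cell)
  also have "\<dots> = card A ^ 2 * G ^ 2" by (simp add: card_cartesian_product power2_eq_square)
  finally show ?thesis .
qed

text \<open>Along a line of slope \<open>m \<noteq> 0\<close> both cell coordinates are monotone, increasing together
  if \<open>m > 0\<close> and in opposite directions if \<open>m < 0\<close>; so this key separates the cells the line meets.\<close>

definition cell_key :: "'a::linordered_field \<Rightarrow> nat \<times> nat \<Rightarrow> int" where
  "cell_key m c = int (fst c) + (if m > 0 then int (snd c) else - int (snd c))"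

lemma grid_cell_eq_if_cell_key_eq:
  assumes A: "finite A" and m: "fst l \<noteq> 0" and p: "p \<in> line_points A l" and q: "q \<in> line_points A l"
    and lt: "fst p < fst q" and key: "cell_key (fst l) (grid_cell G A p) = cell_key (fst l) (grid_cell G A q)"
  shows "grid_cell G A p = grid_cell G A q"
proof -
  have pA: "fst p \<in> A" "snd p \<in> A" and qA: "fst q \<in> A" "snd q \<in> A"
    and ps: "snd p = fst l * fst p + snd l" and qs: "snd q = fst l * fst q + snd l"
    using p q unfolding line_points_def by auto
  have x: "rank_in A (fst p) div G \<le> rank_in A (fst q) div G"
    using rank_in_strict_mono[OF A pA(1) qA(1) lt] by (intro div_le_mono) simp
  show ?thesis
  proof (cases "fst l > 0")
    case True
    then have "snd p < snd q" using ps qs lt by simp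
    then have "rank_in A (snd p) div G \<le> rank_in A (snd q) div G"
      using rank_in_strict_mono[OF A pA(2) qA(2)] by (intro div_le_mono) simp
    then show ?thesis using x key True unfolding cell_key_def grid_cell_def by auto
  next
    case False
    then have "snd q < snd p" using m ps qs lt by (simp add: mult_strict_left_mono_neg)
    then have "rank_in A (snd q) div G \<le> rank_in A (snd p) div G"
      using rank_in_strict_mono[OF A qA(2) pA(2)] by (intro div_le_mono) simp
    then show ?thesis using x key False unfolding cell_key_def grid_cell_def by auto
  qed
qed

lemma card_cells_on_line_le:
  assumes A: "finite A" and m: "fst l \<noteq> 0"
  shows "card (grid_cell G A ` line_points A l) \<le> 3 * ((card A - 1) div G) + 1"
proof -
  define D where "D = (card A - 1) div G"
  have "inj_on (cell_key (fst l)) (grid_cell G A ` line_points A l)"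
  proof (rule inj_onI)
    fix c1 c2 assume "c1 \<in> grid_cell G A ` line_points A l" "c2 \<in> grid_cell G A ` line_points A l"
      and key: "cell_key (fst l) c1 = cell_key (fst l) c2"
    then obtain p q where p: "p \<in> line_points A l" "c1 = grid_cell G A p"
      and q: "q \<in> line_points A l" "c2 = grid_cell G A q" by auto
    consider "fst p < fst q" | "fst p = fst q" | "fst q < fst p" by linarith
    then show "c1 = c2"
    proof cases
      case 1
      then show ?thesis using grid_cell_eq_if_cell_key_eq[OF A m p(1) q(1)] p q key by simp
    next
      case 2
      then have "p = q" using p q unfolding line_points_def by (auto simp: prod_eq_iff)
      then show ?thesis using p q by simp
    next
      case 3
      have "grid_cell G A q = grid_cell G A p"
        by (rule grid_cell_eq_if_cell_key_eq[OF A m q(1) p(1) 3]) (use key p q in simp)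
      then show ?thesis using p q by simp
    qed
  qed
  moreover have "cell_key (fst l) ` grid_cell G A ` line_points A l \<subseteq> {- int D .. 2 * int D}"
  proof
    fix z assume "z \<in> cell_key (fst l) ` grid_cell G A ` line_points A l"
    then obtain p where p: "p \<in> line_points A l" "z = cell_key (fst l) (grid_cell G A p)" by auto
    then have "fst p \<in> A" "snd p \<in> A" unfolding line_points_def by auto
    then have "rank_in A (fst p) < card A" "rank_in A (snd p) < card A"
      using rank_in_less_card[OF A] by auto
    then have "rank_in A (fst p) \<le> card A - 1" "rank_in A (snd p) \<le> card A - 1"
      by auto
    then have "rank_in A (fst p) div G \<le> D" "rank_in A (snd p) div G \<le> D"
      unfolding D_def by (auto intro: div_le_mono)
    then show "z \<in> {- int D .. 2 * int D}" using p unfolding cell_key_def grid_cell_def by auto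
  qed
  ultimately have "card (grid_cell G A ` line_points A l) \<le> card {- int D .. 2 * int D}"
    by (metis card_image card_mono finite_atLeastAtMost_int)
  then show ?thesis unfolding D_def by simp
qed

text \<open>A rich line meets few cells, so by pigeonhole most of its points share a cell with another.\<close>

lemma incidences_le_same_cell_pairs:
  assumes A: "finite A" and m: "fst l \<noteq> 0"
    and rich: "2 * (3 * ((card A - 1) div G) + 1) \<le> incidences A l"
  shows "incidences A l \<le> 2 * card (same_cell_pairs G A (line_points A l))"
proof -
  define S where "S = line_points A l"
  define sp where "sp = same_cell_pairs G A S"
  have fS: "finite S" unfolding S_def using finite_line_points[OF A] .
  have fsp: "finite sp" unfolding sp_def same_cell_pairs_def using fS by simp
  define good where "good = fst ` sp"
  have good: "good \<subseteq> S" unfolding good_def sp_def same_cell_pairs_def by auto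
  have "inj_on (grid_cell G A) (S - good)"
  proof (rule inj_onI)
    fix p q assume p: "p \<in> S - good" and q: "q \<in> S - good" and e: "grid_cell G A p = grid_cell G A q"
    show "p = q"
    proof (rule ccontr)
      assume "p \<noteq> q"
      then have "(p, q) \<in> sp" using p q e unfolding sp_def same_cell_pairs_def by auto
      then show False using p unfolding good_def by force
    qed
  qed
  then have "card (S - good) = card (grid_cell G A ` (S - good))" by (rule card_image[symmetric])
  also have "\<dots> \<le> card (grid_cell G A ` S)" by (rule card_mono) (use fS in auto)
  also have "\<dots> \<le> 3 * ((card A - 1) div G) + 1" unfolding S_def by (rule card_cells_on_line_le[OF A m])
  finally have "card (S - good) \<le> 3 * ((card A - 1) div G) + 1" .
  moreover have "card S = card good + card (S - good)"
    using card_Diff_subset[OF finite_subset[OF good fS] good] card_mono[OF fS good] by simp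
  moreover have "card good \<le> card sp" unfolding good_def by (rule card_image_le[OF fsp])
  ultimately show ?thesis using rich unfolding S_def sp_def incidences_def by simp
qed

lemma sum_incidences_rich_nonhorizontal_le:
  assumes A: "finite A" and L: "finite L" and G: "G \<ge> 1"
  shows "(\<Sum>l\<in>{l\<in>L. fst l \<noteq> 0 \<and> 2 * (3 * ((card A - 1) div G) + 1) \<le> incidences A l}. incidences A l)
    \<le> 2 * (card A ^ 2 * G ^ 2)"
    (is "(\<Sum>l\<in>?R. _) \<le> _")
proof -
  have "(\<Sum>l\<in>?R. incidences A l) \<le> (\<Sum>l\<in>?R. 2 * card (same_cell_pairs G A (line_points A l)))"
    by (rule sum_mono) (use incidences_le_same_cell_pairs[OF A] in blast)
  also have "\<dots> = 2 * card (SIGMA l:?R. same_cell_pairs G A (line_points A l))"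
    using L A by (simp add: sum_distrib_left[symmetric] same_cell_pairs_def finite_line_points)
  also have "\<dots> \<le> 2 * card (same_cell_pairs G A (A \<times> A))"
    using line_points_subset[of A] A
    by (intro mult_le_mono2 card_Sigma_line_pairs_le) (auto simp: same_cell_pairs_def)
  also have "\<dots> \<le> 2 * (card A ^ 2 * G ^ 2)" using card_same_cell_pairs_le[OF A G] by simp
  finally show ?thesis .
qed

lemma exists_cell_size:
  fixes n T :: nat
  assumes T: "2 \<le> T" "T \<le> n"
  obtains G where "G \<ge> 1" "2 * (3 * ((n - 1) div G) + 1) \<le> T" "G * T \<le> 13 * n"
proof -
  define G where "G = 12 * n div T + 1"
  have GT_eq: "G * T = 12 * n div T * T + T" unfolding G_def by simp
  have GT: "12 * n < G * T"
    using GT_eq div_mult_mod_eq[of "12 * n" T] mod_less_divisor[of T "12 * n"] T by linarith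
  have "G * T \<le> 13 * n"
    using GT_eq div_times_less_eq_dividend[of "12 * n" T] T by linarith
  define D where "D = (n - 1) div G"
  have "D * G \<le> n - 1" unfolding D_def by (rule div_times_less_eq_dividend)
  then have "D * (G * T) \<le> (n - 1) * T" using mult_le_mono1[of "D * G" "n - 1" T] by (simp add: mult.assoc)
  also have "\<dots> < n * T" using T by simp
  finally have "D * (12 * n) < n * T" using GT mult_le_mono2[of "12 * n" "G * T" D] by linarith
  then have "12 * D < T" by (simp add: mult.commute mult.left_commute)
  then have "2 * (3 * ((n - 1) div G) + 1) \<le> T" unfolding D_def[symmetric] using T by (cases "D = 0") auto
  then show thesis using that[of G] \<open>G * T \<le> 13 * n\<close> by (simp add: G_def)
qed

lemma rich_lines_incidences_le_nat:
  assumes A: "finite A" and L: "finite L" and T: "2 \<le> T" "T \<le> card A"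
  shows "(\<Sum>l\<in>{l\<in>L. T \<le> incidences A l}. incidences A l) * T ^ 2 \<le> 339 * card A ^ 4"
proof -
  define n where "n = card A"
  obtain G where G: "G \<ge> 1" "2 * (3 * ((n - 1) div G) + 1) \<le> T" "G * T \<le> 13 * n"
    using exists_cell_size[OF T[folded n_def]] .
  let ?R = "{l\<in>L. T \<le> incidences A l}"
  let ?H = "{l\<in>L. fst l = 0}"
  let ?N = "{l\<in>L. fst l \<noteq> 0 \<and> 2 * (3 * ((card A - 1) div G) + 1) \<le> incidences A l}"
  have "(\<Sum>l\<in>?R. incidences A l) = (\<Sum>l\<in>?R \<inter> ?H. incidences A l) + (\<Sum>l\<in>?R - ?H. incidences A l)"
    by (rule sum.Int_Diff) (use L in simp)
  also have "\<dots> \<le> (\<Sum>l\<in>?H. incidences A l) + (\<Sum>l\<in>?N. incidences A l)"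
    using L G(2) unfolding n_def by (intro add_mono sum_mono2) auto
  also have "\<dots> \<le> n ^ 2 + 2 * (n ^ 2 * G ^ 2)"
    using sum_incidences_horizontal_le[OF A L] sum_incidences_rich_nonhorizontal_le[OF A L G(1)]
    unfolding n_def by (intro add_mono)
  finally have "(\<Sum>l\<in>?R. incidences A l) * T ^ 2 \<le> (n ^ 2 + 2 * (n ^ 2 * G ^ 2)) * T ^ 2"
    by (rule mult_right_mono) simp
  also have "\<dots> = n ^ 2 * T ^ 2 + 2 * n ^ 2 * (G * T) ^ 2" by (simp add: algebra_simps power2_eq_square)
  also have "\<dots> \<le> n ^ 2 * n ^ 2 + 2 * n ^ 2 * (13 * n) ^ 2"
    using T G(3) unfolding n_def by (intro add_mono mult_le_mono2 power_mono) simp_all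
  also have "\<dots> = 339 * n ^ 4" by (simp add: algebra_simps power2_eq_square power4_eq_xxxx)
  finally show ?thesis unfolding n_def .
qed

lemma rich_lines_incidences_le:
  assumes A: "finite A" and L: "finite L" and T: "T \<ge> 1"
  shows "real (\<Sum>l\<in>{l\<in>L. T \<le> incidences A l \<and> 2 \<le> incidences A l}. incidences A l)
    \<le> 339 * real (card A) ^ 4 / real T ^ 2"
proof -
  define T' where "T' = max T 2"
  have R: "{l\<in>L. T \<le> incidences A l \<and> 2 \<le> incidences A l} = {l\<in>L. T' \<le> incidences A l}"
    unfolding T'_def by auto
  show ?thesis
  proof (cases "T' \<le> card A")
    case True
    have "(\<Sum>l\<in>{l\<in>L. T' \<le> incidences A l}. incidences A l) * T' ^ 2 \<le> 339 * card A ^ 4"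
      by (rule rich_lines_incidences_le_nat[OF A L _ True]) (simp add: T'_def)
    then have "real (\<Sum>l\<in>{l\<in>L. T' \<le> incidences A l}. incidences A l) * real T' ^ 2
        \<le> 339 * real (card A) ^ 4"
      by (simp only: of_nat_le_iff[symmetric, where 'a=real] of_nat_mult of_nat_numeral of_nat_power)
    moreover have "real T ^ 2 \<le> real T' ^ 2" unfolding T'_def by (intro power_mono) auto
    ultimately have "real (\<Sum>l\<in>{l\<in>L. T' \<le> incidences A l}. incidences A l) * real T ^ 2
        \<le> 339 * real (card A) ^ 4"
      using mult_left_mono[of "real T ^ 2" "real T' ^ 2"] by (meson of_nat_0_le_iff order_trans)
    then show ?thesis unfolding R using T by (simp add: field_simps)
  next
    case False
    have "\<not> T' \<le> incidences A l" for l using incidences_le_card[OF A, of l] False by linarith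
    then have "{l\<in>L. T' \<le> incidences A l} = {}" by blast
    then show ?thesis unfolding R by (simp only: sum.empty) simp
  qed
qed

section \<open>Moments of incidence numbers\<close>

lemma sum_inverse_squares_le_diff:
  assumes "K \<ge> 1" "N \<ge> K"
  shows "(\<Sum>T\<in>{K+1..N}. 1 / real T ^ 2) \<le> 1 / real K - 1 / real N"
  using assms(2)
proof (induction N rule: dec_induct)
  case (step N)
  have N: "real N \<ge> 1" using step assms by simp
  have "1 / real (Suc N) ^ 2 \<le> 1 / (real N * real (Suc N))"
    using N by (intro divide_left_mono) (auto simp: power2_eq_square)
  also have "\<dots> = 1 / real N - 1 / real (Suc N)" using N by (simp add: field_simps)
  finally have "1 / real (Suc N) ^ 2 \<le> 1 / real N - 1 / real (Suc N)" .
  moreover have "{K+1..Suc N} = insert (Suc N) {K+1..N}" using step by auto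
  ultimately show ?case using step by simp
qed simp

lemma sum_inverse_squares_le:
  assumes "K \<ge> 1"
  shows "(\<Sum>T\<in>{K+1..N}. 1 / real T ^ 2) \<le> 1 / real K"
proof (cases "K \<le> N")
  case True
  moreover have "0 \<le> 1 / real N" by simp
  ultimately show ?thesis using sum_inverse_squares_le_diff[OF assms True] by linarith
qed simp

lemma sum_inverse_le_ln:
  assumes "n \<ge> 1"
  shows "(\<Sum>T\<in>{1..n}. 1 / real T) \<le> 1 + ln (real n)"
  using assms
proof (induction n rule: dec_induct)
  case (step N)
  have N: "real N \<ge> 1" using step by simp
  have "ln (real N / real (Suc N)) \<le> real N / real (Suc N) - 1"
    by (rule ln_le_minus_one) (use N in simp)
  then have "1 / real (Suc N) \<le> ln (real (Suc N)) - ln (real N)"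
    using N by (simp add: ln_div field_simps)
  moreover have "{1..Suc N} = insert (Suc N) {1..N}" by auto
  ultimately show ?case using step by simp
qed simp

lemma sum_atLeastAtMost_if_le:
  fixes i n :: nat
  assumes "i \<le> n"
  shows "(\<Sum>T\<in>{a..n}. if T \<le> i then w T else 0) = (\<Sum>T\<in>{a..i}. w T)"
proof -
  have "{T\<in>{a..n}. T \<le> i} = {a..i}" using assms by (auto intro: order_trans)
  then show ?thesis by (metis (no_types) finite_atLeastAtMost sum.inter_filter)
qed

text \<open>Layer-cake summation: each \<open>l\<close> is counted once for every threshold \<open>T \<le> f l\<close>.\<close>

lemma sum_layers_swap:
  fixes f :: "'a \<Rightarrow> nat" and w :: "nat \<Rightarrow> real"
  assumes "finite R"
  shows "(\<Sum>l\<in>R. real (f l) * (\<Sum>T\<in>I. if T \<le> f l then w T else 0))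
    = (\<Sum>T\<in>I. w T * real (\<Sum>l\<in>{l\<in>R. T \<le> f l}. f l))"
proof -
  have "(\<Sum>l\<in>R. real (f l) * (\<Sum>T\<in>I. if T \<le> f l then w T else 0))
      = (\<Sum>T\<in>I. \<Sum>l\<in>R. if T \<le> f l then w T * real (f l) else 0)"
    by (subst sum.swap) (auto simp: sum_distrib_left intro!: sum.cong)
  also have "\<dots> = (\<Sum>T\<in>I. w T * real (\<Sum>l\<in>{l\<in>R. T \<le> f l}. f l))"
    by (rule sum.cong) (simp_all add: sum.inter_filter[OF assms, symmetric] sum_distrib_left)
  finally show ?thesis .
qed

lemma sum_square_incidences_rich_le_nat:
  assumes A: "finite A" and L: "finite L" and K: "K \<ge> 1"
  shows "(\<Sum>l\<in>{l\<in>L. K \<le> incidences A l \<and> 2 \<le> incidences A l}. real (incidences A l) ^ 2)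
    \<le> 678 * real (card A) ^ 4 / real K"
proof -
  define n where "n = card A"
  define R where "R = {l\<in>L. K \<le> incidences A l \<and> 2 \<le> incidences A l}"
  have fR: "finite R" unfolding R_def using L by simp
  have bound: "real (\<Sum>l\<in>{l\<in>L. T \<le> incidences A l \<and> 2 \<le> incidences A l}. incidences A l)
      \<le> 339 * real n ^ 4 / real T ^ 2" if "T \<ge> 1" for T
    unfolding n_def by (rule rich_lines_incidences_le[OF A L that])
  have "(\<Sum>l\<in>R. real (incidences A l) ^ 2)
      = (\<Sum>l\<in>R. real K * real (incidences A l)
          + real (incidences A l) * (\<Sum>T\<in>{K+1..n}. if T \<le> incidences A l then 1 else 0))"
  proof (rule sum.cong)
    fix l assume "l \<in> R"
    then have "K \<le> incidences A l" "incidences A l \<le> n"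
      unfolding R_def n_def using incidences_le_card[OF A] by auto
    then show "real (incidences A l) ^ 2 = real K * real (incidences A l)
        + real (incidences A l) * (\<Sum>T\<in>{K+1..n}. if T \<le> incidences A l then 1 else 0)"
      by (simp add: sum_atLeastAtMost_if_le of_nat_diff power2_eq_square algebra_simps)
  qed simp
  also have "\<dots> = real K * real (\<Sum>l\<in>R. incidences A l)
      + (\<Sum>T\<in>{K+1..n}. real (\<Sum>l\<in>{l\<in>R. T \<le> incidences A l}. incidences A l))"
    using sum_layers_swap[OF fR, of "incidences A" "\<lambda>_. 1"] by (simp add: sum.distrib sum_distrib_left)
  also have "\<dots> \<le> real K * (339 * real n ^ 4 / real K ^ 2) + (\<Sum>T\<in>{K+1..n}. 339 * real n ^ 4 / real T ^ 2)"
  proof (intro add_mono mult_left_mono sum_mono)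
    fix T assume "T \<in> {K+1..n}"
    then have "{l\<in>R. T \<le> incidences A l} = {l\<in>L. T \<le> incidences A l \<and> 2 \<le> incidences A l}"
      unfolding R_def by auto
    with bound show "real (\<Sum>l\<in>{l\<in>R. T \<le> incidences A l}. incidences A l) \<le> 339 * real n ^ 4 / real T ^ 2"
      using K \<open>T \<in> {K+1..n}\<close> by simp
  qed (use bound[OF K] in \<open>simp_all add: R_def\<close>)
  also have "\<dots> \<le> 339 * real n ^ 4 / real K + 339 * real n ^ 4 / real K"
  proof -
    have tail: "(\<Sum>T\<in>{K+1..n}. 339 * real n ^ 4 / real T ^ 2) \<le> 339 * real n ^ 4 / real K"
      using sum_inverse_squares_le[OF K, of n]
      by (simp add: sum_distrib_left[symmetric] divide_inverse mult_left_mono flip: inverse_eq_divide)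
    have "real K * (339 * real n ^ 4 / real K ^ 2) = 339 * real n ^ 4 / real K"
      by (simp add: power2_eq_square)
    then show ?thesis using tail by (intro add_mono) simp_all
  qed
  finally show ?thesis unfolding R_def n_def by simp
qed

lemma sum_square_incidences_rich_le:
  assumes A: "finite A" and L: "finite L" and M: "M \<ge> 1"
  shows "(\<Sum>l\<in>{l\<in>L. M < real (incidences A l) \<and> 2 \<le> incidences A l}. real (incidences A l) ^ 2)
    \<le> 678 * real (card A) ^ 4 / M"
proof -
  define K where "K = nat \<lfloor>M\<rfloor> + 1"
  have K: "M < real K" "K \<ge> 1" unfolding K_def using M by linarith+
  have "M < real i \<longleftrightarrow> K \<le> i" for i :: nat
  proof -
    have "M < real i \<longleftrightarrow> \<lfloor>M\<rfloor> < int i" by (metis floor_less_iff of_int_of_nat_eq)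
    also have "\<dots> \<longleftrightarrow> K \<le> i" unfolding K_def using M by linarith
    finally show ?thesis .
  qed
  then have "{l\<in>L. M < real (incidences A l) \<and> 2 \<le> incidences A l}
      = {l\<in>L. K \<le> incidences A l \<and> 2 \<le> incidences A l}" by auto
  moreover have "678 * real (card A) ^ 4 / real K \<le> 678 * real (card A) ^ 4 / M"
    using K M by (intro divide_left_mono) auto
  ultimately show ?thesis using sum_square_incidences_rich_le_nat[OF A L K(2)] by simp
qed

lemma sum_cube_incidences_le:
  assumes A: "finite A" and L: "finite L"
  shows "(\<Sum>l\<in>{l\<in>L. 2 \<le> incidences A l}. real (incidences A l) ^ 3)
    \<le> 678 * real (card A) ^ 4 * (1 + ln (real (card A)))"
proof -
  define n where "n = card A"
  define R where "R = {l\<in>L. 2 \<le> incidences A l}"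
  have fR: "finite R" unfolding R_def using L by simp
  have "(\<Sum>l\<in>R. real (incidences A l) ^ 3)
      \<le> (\<Sum>l\<in>R. real (incidences A l) * (\<Sum>T\<in>{1..n}. if T \<le> incidences A l then 2 * real T else 0))"
  proof (rule sum_mono)
    fix l
    have i: "incidences A l \<le> n" unfolding n_def by (rule incidences_le_card[OF A])
    have "real i ^ 2 \<le> (\<Sum>T\<in>{1..i}. 2 * real T)" for i :: nat
      by (induction i) (auto simp: power2_eq_square algebra_simps)
    then have "real (incidences A l) ^ 2 \<le> (\<Sum>T\<in>{1..incidences A l}. 2 * real T)" .
    then show "real (incidences A l) ^ 3
        \<le> real (incidences A l) * (\<Sum>T\<in>{1..n}. if T \<le> incidences A l then 2 * real T else 0)"
      unfolding sum_atLeastAtMost_if_le[OF i] power3_eq_cube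
      by (metis mult.assoc mult_left_mono of_nat_0_le_iff power2_eq_square)
  qed
  also have "\<dots> = (\<Sum>T\<in>{1..n}. 2 * real T * real (\<Sum>l\<in>{l\<in>R. T \<le> incidences A l}. incidences A l))"
    by (rule sum_layers_swap[OF fR])
  also have "\<dots> \<le> (\<Sum>T\<in>{1..n}. 2 * real T * (339 * real n ^ 4 / real T ^ 2))"
  proof (intro sum_mono mult_left_mono)
    fix T assume "T \<in> {1..n}"
    moreover have "{l\<in>R. T \<le> incidences A l} = {l\<in>L. T \<le> incidences A l \<and> 2 \<le> incidences A l}"
      unfolding R_def by auto
    ultimately show "real (\<Sum>l\<in>{l\<in>R. T \<le> incidences A l}. incidences A l) \<le> 339 * real n ^ 4 / real T ^ 2"
      using rich_lines_incidences_le[OF A L, of T] unfolding n_def by simp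
  qed simp
  also have "\<dots> = 678 * real n ^ 4 * (\<Sum>T\<in>{1..n}. 1 / real T)"
    by (simp add: sum_distrib_left power2_eq_square)
  also have "\<dots> \<le> 678 * real n ^ 4 * (1 + ln (real n))"
  proof (cases "n = 0")
    case False
    then show ?thesis using sum_inverse_le_ln[of n] by (intro mult_left_mono) auto
  qed simp
  finally show ?thesis unfolding R_def n_def .
qed

section \<open>Collisions of \<open>(b + c)(d + a)\<close>\<close>

lemma card_pairs_eq_sum_fibres:
  assumes "finite X" "finite Y" "finite V" "f ` X \<subseteq> V"
  shows "card {xy \<in> X \<times> Y. f (fst xy) = g (snd xy)}
    = (\<Sum>v\<in>V. card {x\<in>X. f x = v} * card {y\<in>Y. g y = v})"
proof -
  have "{xy \<in> X \<times> Y. f (fst xy) = g (snd xy)} = (\<Union>v\<in>V. {x\<in>X. f x = v} \<times> {y\<in>Y. g y = v})"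
    using assms(4) by auto
  moreover have "card (\<Union>v\<in>V. {x\<in>X. f x = v} \<times> {y\<in>Y. g y = v})
      = (\<Sum>v\<in>V. card ({x\<in>X. f x = v} \<times> {y\<in>Y. g y = v}))"
    by (rule card_UN_disjoint) (use assms in auto)
  ultimately show ?thesis by (simp add: card_cartesian_product)
qed

lemma card_eq_sum_card_fibres:
  assumes "finite X" "finite V" "f ` X \<subseteq> V"
  shows "card X = (\<Sum>v\<in>V. card {x\<in>X. f x = v})"
proof -
  have "X = (\<Union>v\<in>V. {x\<in>X. f x = v})" using assms(3) by auto
  moreover have "card (\<Union>v\<in>V. {x\<in>X. f x = v}) = (\<Sum>v\<in>V. card {x\<in>X. f x = v})"
    by (rule card_UN_disjoint) (use assms in auto)
  ultimately show ?thesis by simp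
qed

lemma card_cross_collisions_le:
  assumes X: "finite X" and V: "finite V" and "f ` X \<subseteq> V" "g ` X \<subseteq> V"
  shows "2 * real (card {xy \<in> X \<times> X. f (fst xy) = g (snd xy)})
    \<le> real (card {xy \<in> X \<times> X. f (fst xy) = f (snd xy)}) + real (card {xy \<in> X \<times> X. g (fst xy) = g (snd xy)})"
proof -
  define cf where "cf v = real (card {x\<in>X. f x = v})" for v
  define cg where "cg v = real (card {x\<in>X. g x = v})" for v
  have "2 * real (card {xy \<in> X \<times> X. f (fst xy) = g (snd xy)}) = (\<Sum>v\<in>V. 2 * (cf v * cg v))"
    unfolding cf_def cg_def using card_pairs_eq_sum_fibres[OF X X V assms(3)] by (simp add: sum_distrib_left)
  also have "\<dots> \<le> (\<Sum>v\<in>V. cf v * cf v + cg v * cg v)"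
  proof (rule sum_mono)
    fix v
    have "0 \<le> (cf v - cg v) ^ 2" by simp
    then show "2 * (cf v * cg v) \<le> cf v * cf v + cg v * cg v" by (simp add: power2_eq_square algebra_simps)
  qed
  also have "\<dots> = real (card {xy \<in> X \<times> X. f (fst xy) = f (snd xy)}) + real (card {xy \<in> X \<times> X. g (fst xy) = g (snd xy)})"
    unfolding cf_def cg_def sum.distrib
    using card_pairs_eq_sum_fibres[OF X X V assms(3), of f] card_pairs_eq_sum_fibres[OF X X V assms(4), of g]
    by simp
  finally show ?thesis .
qed

definition sumprod_map :: "real \<Rightarrow> real \<times> real \<times> real \<Rightarrow> real" where
  "sumprod_map a x = (fst x + fst (snd x)) * (snd (snd x) + a)"

definition sumprod_collisions :: "real set \<Rightarrow> real \<Rightarrow> ((real \<times> real \<times> real) \<times> (real \<times> real \<times> real)) set" where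
  "sumprod_collisions A a =
     {xy \<in> (A \<times> A \<times> A) \<times> (A \<times> A \<times> A). sumprod_map a (fst xy) = sumprod_map a (snd xy)}"

lemma sumprod_set_eq_image: "sumprod_set A a = sumprod_map a ` (A \<times> A \<times> A)"
  unfolding sumprod_set_def sumprod_map_def by force

lemma card_sumprod_set_mult_collisions_ge:
  assumes A: "finite A"
  shows "real (card A) ^ 6 \<le> real (card (sumprod_set A a)) * real (card (sumprod_collisions A a))"
proof -
  define X where "X = A \<times> A \<times> A"
  define S where "S = sumprod_map a ` X"
  have fX: "finite X" and fS: "finite S" using A unfolding X_def S_def by simp_all
  define c where "c s = real (card {x\<in>X. sumprod_map a x = s})" for s
  have "card X = (\<Sum>s\<in>S. card {x\<in>X. sumprod_map a x = s})"
    by (rule card_eq_sum_card_fibres[OF fX fS]) (simp add: S_def)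
  then have "real (card X) = (\<Sum>s\<in>S. c s)" unfolding c_def by simp
  moreover have "card X = card A ^ 3" unfolding X_def by (simp add: card_cartesian_product power3_eq_cube)
  ultimately have sum_c: "real (card A) ^ 3 = (\<Sum>s\<in>S. c s)" by simp
  have "card (sumprod_collisions A a) = (\<Sum>s\<in>S. card {x\<in>X. sumprod_map a x = s} * card {x\<in>X. sumprod_map a x = s})"
    unfolding sumprod_collisions_def X_def[symmetric] by (rule card_pairs_eq_sum_fibres[OF fX fX fS]) (simp add: S_def)
  then have sum_c2: "real (card (sumprod_collisions A a)) = (\<Sum>s\<in>S. c s ^ 2)"
    unfolding c_def by (simp add: power2_eq_square)
  have "(\<Sum>s\<in>S. c s) ^ 2 \<le> (\<Sum>s\<in>S. c s ^ 2) * real (card S)" by (rule sum_squared_le_sum_of_squares)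
  then have "(real (card A) ^ 3) ^ 2 \<le> real (card (sumprod_collisions A a)) * real (card S)"
    unfolding sum_c sum_c2 .
  moreover have "S = sumprod_set A a" unfolding S_def X_def sumprod_set_eq_image ..
  ultimately show ?thesis by (simp add: power_mult[symmetric] mult.commute)
qed

definition ratio_set :: "real set \<Rightarrow> real set" where
  "ratio_set A = (\<lambda>x. (snd (snd x) + fst x) / (fst (snd x) + fst x)) ` (A \<times> A \<times> A)"

definition sum_ratio_pairs :: "real set \<Rightarrow> real \<Rightarrow> ((real \<times> real) \<times> (real \<times> real)) set" where
  "sum_ratio_pairs A r =
     {pq \<in> (A \<times> A) \<times> (A \<times> A). snd (fst pq) + snd (snd pq) = r * (fst (fst pq) + fst (snd pq))}"

definition shift_ratio_pairs :: "real set \<Rightarrow> real \<Rightarrow> real \<Rightarrow> (real \<times> real) set" where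
  "shift_ratio_pairs A r a = {p \<in> A \<times> A. snd p + a = r * (fst p + a) \<and> fst p + a \<noteq> 0}"

lemma finite_ratio_set: "finite A \<Longrightarrow> finite (ratio_set A)"
  unfolding ratio_set_def by simp

lemma finite_sum_ratio_pairs: "finite A \<Longrightarrow> finite (sum_ratio_pairs A r)"
  unfolding sum_ratio_pairs_def by simp

lemma finite_shift_ratio_pairs: "finite A \<Longrightarrow> finite (shift_ratio_pairs A r a)"
  unfolding shift_ratio_pairs_def by simp

lemma card_sumprod_map_zeros_le:
  assumes A: "finite A"
  shows "card {x \<in> A \<times> A \<times> A. sumprod_map a x = 0} \<le> 2 * card A ^ 2"
proof -
  let ?B = "(\<lambda>p. (fst p, - fst p, snd p)) ` (A \<times> A)" and ?D = "(\<lambda>p. (fst p, snd p, - a)) ` (A \<times> A)"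
  have "{x \<in> A \<times> A \<times> A. sumprod_map a x = 0} \<subseteq> ?B \<union> ?D"
  proof
    fix x assume x: "x \<in> {x \<in> A \<times> A \<times> A. sumprod_map a x = 0}"
    obtain b c d where xe: "x = (b, c, d)" by (cases x) auto
    have m: "b \<in> A" "c \<in> A" "d \<in> A" and "(b + c) * (d + a) = 0"
      using x xe unfolding sumprod_map_def by auto
    then have "c = - b \<or> d = - a" by (auto simp: add_eq_0_iff)
    then show "x \<in> ?B \<union> ?D"
    proof
      assume "c = - b" then show ?thesis using xe m by (auto intro!: image_eqI[of _ _ "(b, d)"])
    next
      assume "d = - a" then show ?thesis using xe m by (auto intro!: image_eqI[of _ _ "(b, c)"])
    qed
  qed
  then have "card {x \<in> A \<times> A \<times> A. sumprod_map a x = 0} \<le> card (?B \<union> ?D)"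
    by (rule card_mono[rotated]) (use A in simp)
  also have "\<dots> \<le> card ?B + card ?D" by (rule card_Un_le)
  also have "\<dots> \<le> card (A \<times> A) + card (A \<times> A)" by (intro add_mono card_image_le) (use A in auto)
  finally show ?thesis by (simp add: card_cartesian_product power2_eq_square)
qed

text \<open>A collision \<open>(b + c)(d + a) = (b' + c')(d' + a) \<noteq> 0\<close> is recorded by its ratio
  \<open>r = (d' + a)/(d + a) = (b + c)/(b' + c')\<close>, which turns it into a pair of independent incidences.\<close>

lemma card_nonzero_collisions_le:
  assumes A: "finite A" and a: "a \<in> A"
  shows "card {xy \<in> sumprod_collisions A a. sumprod_map a (fst xy) \<noteq> 0}
    \<le> (\<Sum>r\<in>ratio_set A. card (sum_ratio_pairs A r) * card (shift_ratio_pairs A r a))"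
proof -
  let ?C = "{xy \<in> sumprod_collisions A a. sumprod_map a (fst xy) \<noteq> 0}"
  define \<phi> where "\<phi> = (\<lambda>xy :: (real \<times> real \<times> real) \<times> (real \<times> real \<times> real).
     case xy of ((b, c, d), (b', c', d')) \<Rightarrow> ((d' + a) / (d + a), (((b', b), (c', c)), (d, d'))))"
  have "inj_on \<phi> ?C" by (rule inj_onI) (auto simp: \<phi>_def split: prod.splits)
  moreover have "\<phi> ` ?C \<subseteq> (SIGMA r:ratio_set A. sum_ratio_pairs A r \<times> shift_ratio_pairs A r a)"
  proof
    fix z assume "z \<in> \<phi> ` ?C"
    then obtain b c d b' c' d' where z: "z = \<phi> ((b, c, d), (b', c', d'))"
      and m: "((b, c, d), (b', c', d')) \<in> sumprod_collisions A a" and nz: "sumprod_map a (b, c, d) \<noteq> 0"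
      by (auto simp: prod_eq_iff)
    have mem: "b \<in> A" "c \<in> A" "d \<in> A" "b' \<in> A" "c' \<in> A" "d' \<in> A"
      and eq: "(b + c) * (d + a) = (b' + c') * (d' + a)"
      using m unfolding sumprod_collisions_def sumprod_map_def by auto
    have da: "d + a \<noteq> 0" using nz unfolding sumprod_map_def by auto
    define r where "r = (d' + a) / (d + a)"
    have r1: "d' + a = r * (d + a)" unfolding r_def using da by simp
    then have "(b + c) * (d + a) = (r * (b' + c')) * (d + a)" using eq by (simp add: ac_simps)
    then have r2: "b + c = r * (b' + c')" using da by simp
    have "r \<in> ratio_set A" unfolding ratio_set_def r_def using mem a
      by (intro image_eqI[of _ _ "(a, d, d')"]) (auto simp: add.commute)
    then show "z \<in> (SIGMA r:ratio_set A. sum_ratio_pairs A r \<times> shift_ratio_pairs A r a)"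
      using z r1 r2 da mem unfolding \<phi>_def sum_ratio_pairs_def shift_ratio_pairs_def r_def[symmetric] by auto
  qed
  ultimately have "card ?C \<le> card (SIGMA r:ratio_set A. sum_ratio_pairs A r \<times> shift_ratio_pairs A r a)"
    using A by (intro card_inj_on_le)
      (simp_all add: finite_ratio_set finite_sum_ratio_pairs finite_shift_ratio_pairs finite_SigmaI)
  also have "\<dots> = (\<Sum>r\<in>ratio_set A. card (sum_ratio_pairs A r) * card (shift_ratio_pairs A r a))"
    using A by (simp add: finite_ratio_set finite_sum_ratio_pairs finite_shift_ratio_pairs card_cartesian_product)
  finally show ?thesis .
qed

lemma card_sumprod_collisions_le:
  assumes A: "finite A" and a: "a \<in> A"
  shows "real (card (sumprod_collisions A a))
    \<le> 4 * real (card A) ^ 4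
      + (\<Sum>r\<in>ratio_set A. real (card (sum_ratio_pairs A r)) * real (card (shift_ratio_pairs A r a)))"
proof -
  define Z where "Z = {x \<in> A \<times> A \<times> A. sumprod_map a x = 0}"
  have "sumprod_collisions A a \<subseteq> Z \<times> Z \<union> {xy \<in> sumprod_collisions A a. sumprod_map a (fst xy) \<noteq> 0}"
    unfolding sumprod_collisions_def Z_def by auto
  then have "card (sumprod_collisions A a)
      \<le> card (Z \<times> Z \<union> {xy \<in> sumprod_collisions A a. sumprod_map a (fst xy) \<noteq> 0})"
    by (rule card_mono[rotated]) (use A in \<open>simp add: Z_def sumprod_collisions_def\<close>)
  also have "\<dots> \<le> card (Z \<times> Z) + card {xy \<in> sumprod_collisions A a. sumprod_map a (fst xy) \<noteq> 0}"
    by (rule card_Un_le)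
  also have "\<dots> \<le> (2 * card A ^ 2) * (2 * card A ^ 2)
      + (\<Sum>r\<in>ratio_set A. card (sum_ratio_pairs A r) * card (shift_ratio_pairs A r a))"
    using mult_le_mono[OF card_sumprod_map_zeros_le[OF A, of a] card_sumprod_map_zeros_le[OF A, of a]]
      card_nonzero_collisions_le[OF A a]
    unfolding Z_def card_cartesian_product by (rule add_mono)
  finally have "real (card (sumprod_collisions A a))
      \<le> real ((2 * card A ^ 2) * (2 * card A ^ 2)
        + (\<Sum>r\<in>ratio_set A. card (sum_ratio_pairs A r) * card (shift_ratio_pairs A r a)))"
    by (simp only: of_nat_le_iff)
  then show ?thesis by (simp add: power2_eq_square power4_eq_xxxx)
qed

definition intercept :: "'a::linordered_field \<Rightarrow> 'a \<times> 'a \<Rightarrow> 'a" where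
  "intercept r p = snd p - r * fst p"

definition intercepts :: "'a::linordered_field set \<Rightarrow> 'a \<Rightarrow> 'a set" where
  "intercepts A r = intercept r ` (A \<times> A)"

lemma finite_intercepts: "finite A \<Longrightarrow> finite (intercepts A r)"
  unfolding intercepts_def by simp

lemma intercept_fibre: "{p \<in> A \<times> A. intercept r p = u} = line_points A (r, u)"
  unfolding line_points_def intercept_def by auto

lemma sum_incidences_intercepts:
  assumes "finite A"
  shows "(\<Sum>u\<in>intercepts A r. incidences A (r, u)) = card A ^ 2"
  using card_eq_sum_card_fibres[of "A \<times> A" "intercepts A r" "intercept r"] assms
  by (simp add: finite_intercepts intercepts_def intercept_fibre incidences_def card_cartesian_product
      power2_eq_square)

lemma card_sum_ratio_pairs_le:
  assumes A: "finite A"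
  shows "real (card (sum_ratio_pairs A r)) \<le> (\<Sum>u\<in>intercepts A r. real (incidences A (r, u)) ^ 2)"
proof -
  define P where "P = A \<times> A"
  have fP: "finite P" using A unfolding P_def by simp
  define V where "V = intercept r ` P \<union> (\<lambda>p. - intercept r p) ` P"
  have fV: "finite V" using fP unfolding V_def by simp
  have pairs: "sum_ratio_pairs A r = {pq \<in> P \<times> P. intercept r (fst pq) = - intercept r (snd pq)}"
    unfolding sum_ratio_pairs_def P_def intercept_def by (auto simp: algebra_simps)
  have "2 * real (card (sum_ratio_pairs A r))
      \<le> real (card {pq \<in> P \<times> P. intercept r (fst pq) = intercept r (snd pq)})
        + real (card {pq \<in> P \<times> P. - intercept r (fst pq) = - intercept r (snd pq)})"
    unfolding pairs by (rule card_cross_collisions_le[OF fP fV]) (auto simp: V_def)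
  then have "real (card (sum_ratio_pairs A r))
      \<le> real (card {pq \<in> P \<times> P. intercept r (fst pq) = intercept r (snd pq)})"
    by simp
  also have "card {pq \<in> P \<times> P. intercept r (fst pq) = intercept r (snd pq)}
      = (\<Sum>u\<in>intercepts A r. incidences A (r, u) ^ 2)"
    using card_pairs_eq_sum_fibres[OF fP fP finite_intercepts[OF A], where f = "intercept r" and g = "intercept r"]
    by (simp add: P_def intercepts_def intercept_fibre incidences_def power2_eq_square)
  finally show ?thesis by simp
qed

lemma shift_ratio_pairs_subset: "shift_ratio_pairs A r a \<subseteq> line_points A (r, (r - 1) * a)"
  unfolding shift_ratio_pairs_def line_points_def by (auto simp: algebra_simps)

lemma card_shift_ratio_pairs_le: "finite A \<Longrightarrow> card (shift_ratio_pairs A r a) \<le> incidences A (r, (r - 1) * a)"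
  unfolding incidences_def by (rule card_mono[OF finite_line_points shift_ratio_pairs_subset])

lemma sum_card_shift_ratio_pairs_le:
  assumes A: "finite A"
  shows "(\<Sum>r\<in>ratio_set A. \<Sum>a\<in>A. card (shift_ratio_pairs A r a)) \<le> card A ^ 3"
proof -
  let ?S = "SIGMA r:ratio_set A. SIGMA a:A. shift_ratio_pairs A r a"
  have "(\<Sum>r\<in>ratio_set A. \<Sum>a\<in>A. card (shift_ratio_pairs A r a)) = card ?S"
    using A by (simp add: finite_ratio_set finite_shift_ratio_pairs)
  also have "\<dots> \<le> card (A \<times> A \<times> A)"
  proof (rule card_inj_on_le[of snd])
    show "inj_on snd ?S"
    proof (rule inj_onI)
      fix x y assume x: "x \<in> ?S" and y: "y \<in> ?S" and e: "snd x = snd y"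
      obtain r r' z where xy: "x = (r, z)" "y = (r', z)" using e by (cases x, cases y) auto
      obtain a d d' where "z = (a, d, d')" by (cases z) auto
      then have "d' + a = r * (d + a)" "d' + a = r' * (d + a)" "d + a \<noteq> 0"
        using x y xy unfolding shift_ratio_pairs_def by auto
      then have "r = r'" by auto
      then show "x = y" using xy by simp
    qed
  qed (use A in \<open>auto simp: shift_ratio_pairs_def\<close>)
  finally show ?thesis by (simp add: card_cartesian_product power3_eq_cube)
qed

section \<open>Summing the collisions over \<open>a\<close>\<close>

lemma real_mult_diff_one: "real (i * (i - 1)) = real i * (real i - 1)"
  by (cases i) (auto simp: algebra_simps)

lemma sum_incidences_pairs_slopes_le:
  assumes A: "finite A" and R: "finite R"
  shows "(\<Sum>r\<in>R. \<Sum>u\<in>intercepts A r. real (incidences A (r, u)) * (real (incidences A (r, u)) - 1))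
    \<le> real (card A) ^ 4"
proof -
  have "(\<Sum>r\<in>R. \<Sum>u\<in>intercepts A r. incidences A (r, u) * (incidences A (r, u) - 1))
      = (\<Sum>l\<in>(SIGMA r:R. intercepts A r). incidences A l * (incidences A l - 1))"
    using A R by (simp add: sum.Sigma finite_intercepts)
  also have "\<dots> \<le> card A ^ 4"
    by (rule sum_incidences_pairs_le[OF A]) (use A R in \<open>simp add: finite_intercepts\<close>)
  finally show ?thesis by (metis (no_types, lifting) of_nat_le_iff of_nat_power of_nat_sum real_mult_diff_one sum.cong)
qed

lemma sum_incidences_cubes_slopes_le:
  assumes A: "finite A" and R: "finite R"
  shows "(\<Sum>r\<in>R. \<Sum>u\<in>intercepts A r. real (incidences A (r, u)) * (real (incidences A (r, u)) - 1) ^ 2)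
    \<le> 678 * real (card A) ^ 4 * (1 + ln (real (card A)))"
proof -
  define S where "S = (SIGMA r:R. intercepts A r)"
  have fS: "finite S" unfolding S_def using A R by (simp add: finite_intercepts)
  have pointwise: "real i * (real i - 1) ^ 2 \<le> (if 2 \<le> i then real i ^ 3 else 0)" for i :: nat
  proof (cases "2 \<le> i")
    case True
    then have "(real i - 1) ^ 2 \<le> real i ^ 2" by (intro power_mono) auto
    then show ?thesis using True by (simp add: power3_eq_cube power2_eq_square mult_left_mono)
  next
    case False
    then have "i = 0 \<or> i = 1" by auto
    then show ?thesis by auto
  qed
  have "(\<Sum>r\<in>R. \<Sum>u\<in>intercepts A r. real (incidences A (r, u)) * (real (incidences A (r, u)) - 1) ^ 2)
      = (\<Sum>l\<in>S. real (incidences A l) * (real (incidences A l) - 1) ^ 2)"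
    unfolding S_def using A R by (simp add: sum.Sigma finite_intercepts)
  also have "\<dots> \<le> (\<Sum>l\<in>S. if 2 \<le> incidences A l then real (incidences A l) ^ 3 else 0)"
    by (rule sum_mono) (rule pointwise)
  also have "\<dots> = (\<Sum>l\<in>{l\<in>S. 2 \<le> incidences A l}. real (incidences A l) ^ 3)"
    by (rule sum.inter_filter[OF fS, symmetric])
  also have "\<dots> \<le> 678 * real (card A) ^ 4 * (1 + ln (real (card A)))"
    by (rule sum_cube_incidences_le[OF A fS])
  finally show ?thesis .
qed

text \<open>For \<open>r \<noteq> 1\<close> different \<open>a\<close> give different lines \<open>y = r x + (r - 1) a\<close>. For \<open>r = 1\<close> all these
  lines coincide, which is why this slope is treated separately below.\<close>

lemma sum_rich_shift_ratio_pairs_ne_one_le: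
  assumes A: "finite A" and R: "finite R" and M: "1 \<le> M"
  shows "(\<Sum>r\<in>R - {1}. \<Sum>a\<in>{a\<in>A. M < real (card (shift_ratio_pairs A r a))}.
      real (card (shift_ratio_pairs A r a)) ^ 2)
    \<le> 678 * real (card A) ^ 4 / M"
proof -
  define K where "K r a = real (card (shift_ratio_pairs A r a))" for r a
  define h where "h z = (fst z, (fst z - 1) * snd z)" for z :: "real \<times> real"
  define S where "S = (SIGMA r:R - {1}. {a\<in>A. M < K r a})"
  have K_inc: "K r a \<le> real (incidences A (h (r, a)))" for r a
    unfolding K_def h_def using card_shift_ratio_pairs_le[OF A] by simp
  have fS: "finite S" unfolding S_def using A R by auto
  have inj: "inj_on h S" by (rule inj_onI) (auto simp: h_def S_def prod_eq_iff)
  have "(\<Sum>r\<in>R - {1}. \<Sum>a\<in>{a\<in>A. M < K r a}. K r a ^ 2) = (\<Sum>z\<in>S. K (fst z) (snd z) ^ 2)"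
    unfolding S_def using R A by (subst sum.Sigma) (auto simp: split_beta)
  also have "\<dots> \<le> (\<Sum>z\<in>S. real (incidences A (h z)) ^ 2)"
    by (rule sum_mono) (use K_inc in \<open>auto simp: K_def intro: power_mono\<close>)
  also have "\<dots> = (\<Sum>l\<in>h ` S. real (incidences A l) ^ 2)"
    using sum.reindex[OF inj, of "\<lambda>l. real (incidences A l) ^ 2"] by simp
  also have "h ` S = {l\<in>h ` S. M < real (incidences A l) \<and> 2 \<le> incidences A l}"
  proof -
    have "M < real (incidences A (h z))" if "z \<in> S" for z
      using that K_inc[of "fst z" "snd z"] unfolding S_def by auto
    then show ?thesis using M by fastforce
  qed
  also have "(\<Sum>l\<in>\<dots>. real (incidences A l) ^ 2) \<le> 678 * real (card A) ^ 4 / M"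
    by (rule sum_square_incidences_rich_le[OF A _ M]) (use fS in simp)
  finally show ?thesis unfolding K_def .
qed

lemma sum_rich_shift_ratio_pairs_le:
  assumes A: "finite A" and R: "finite R" and M: "1 \<le> M" "M \<le> real (card A)"
  shows "(\<Sum>r\<in>R. \<Sum>a\<in>{a\<in>A. M < real (card (shift_ratio_pairs A r a))}. real (card (shift_ratio_pairs A r a)) ^ 2)
    \<le> 679 * real (card A) ^ 4 / M"
proof -
  define n where "n = card A"
  define K where "K r a = real (card (shift_ratio_pairs A r a))" for r a
  define B where "B r = {a\<in>A. M < K r a}" for r
  have K_n: "K r a \<le> real n" for r a
    using card_shift_ratio_pairs_le[OF A, of r a] incidences_le_card[OF A, of "(r, (r - 1) * a)"]
    unfolding K_def n_def by simp
  have "(\<Sum>r\<in>R. \<Sum>a\<in>B r. K r a ^ 2) = (\<Sum>r\<in>R \<inter> {1}. \<Sum>a\<in>B r. K r a ^ 2) + (\<Sum>r\<in>R - {1}. \<Sum>a\<in>B r. K r a ^ 2)"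
    by (rule sum.Int_Diff[OF R])
  also have "(\<Sum>r\<in>R \<inter> {1}. \<Sum>a\<in>B r. K r a ^ 2) \<le> (\<Sum>a\<in>A. K 1 a ^ 2)"
  proof (cases "1 \<in> R")
    case True
    then show ?thesis using A by (simp add: B_def sum_mono2)
  qed (simp add: sum_nonneg)
  also have "\<dots> \<le> (\<Sum>a\<in>A. real n ^ 2)"
    by (rule sum_mono) (use K_n in \<open>auto intro: power_mono simp: K_def\<close>)
  also have "\<dots> = real n ^ 3" by (simp add: n_def power3_eq_cube power2_eq_square)
  also have "\<dots> \<le> real n ^ 4 / M"
    using M unfolding n_def by (simp add: field_simps power3_eq_cube power4_eq_xxxx mult_left_mono)
  also have "(\<Sum>r\<in>R - {1}. \<Sum>a\<in>B r. K r a ^ 2) \<le> 678 * real n ^ 4 / M"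
    unfolding K_def B_def n_def by (rule sum_rich_shift_ratio_pairs_ne_one_le[OF A R M(1)])
  finally show ?thesis unfolding K_def B_def n_def by simp
qed

lemma mult_le_weighted_squares:
  fixes b x y :: real
  assumes "b > 0"
  shows "x * y \<le> (b * x ^ 2 + y ^ 2 / b) / 2"
proof -
  have "0 \<le> (b * x - y) ^ 2" by simp
  then have "2 * b * (x * y) \<le> b ^ 2 * x ^ 2 + y ^ 2" by (simp add: power2_diff power_mult_distrib algebra_simps)
  then show ?thesis using assms by (simp add: field_simps power2_eq_square)
qed

text \<open>With \<open>c\<close> the incidence numbers of the lines of one slope, this is the estimate for a single
  ratio: \<open>t\<close> is split into a part \<open>\<le> B\<close> and a rich part \<open>\<tau>\<close>, and the rich part is paired with the
  higher moments of \<open>c\<close> by a weighted AM--GM.\<close>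

lemma sum_squares_mult_le:
  fixes c :: "'u \<Rightarrow> nat"
  assumes U: "finite U" and N: "(\<Sum>u\<in>U. c u) = N" and t: "0 \<le> t" "t \<le> B + \<tau>" and \<beta>: "\<beta> > 0"
  shows "(\<Sum>u\<in>U. real (c u) ^ 2) * t
    \<le> real N * t + B * (\<Sum>u\<in>U. real (c u) * (real (c u) - 1))
      + (\<beta> * (\<Sum>u\<in>U. real (c u) * (real (c u) - 1) ^ 2) + real N * \<tau> ^ 2 / \<beta>) / 2"
proof -
  define P where "P = (\<Sum>u\<in>U. real (c u) * (real (c u) - 1))"
  have P: "0 \<le> P" unfolding P_def
    by (intro sum_nonneg) (metis of_nat_0_le_iff real_mult_diff_one)
  have "(\<Sum>u\<in>U. real (c u) ^ 2) = (\<Sum>u\<in>U. real (c u) + real (c u) * (real (c u) - 1))"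
    by (rule sum.cong) (simp_all add: power2_eq_square algebra_simps)
  also have "\<dots> = real N + P" unfolding P_def sum.distrib N[symmetric] by simp
  finally have sq: "(\<Sum>u\<in>U. real (c u) ^ 2) = real N + P" .
  have "P * \<tau> = (\<Sum>u\<in>U. real (c u) * ((real (c u) - 1) * \<tau>))"
    unfolding P_def sum_distrib_right by (simp add: mult.assoc)
  also have "\<dots> \<le> (\<Sum>u\<in>U. real (c u) * ((\<beta> * (real (c u) - 1) ^ 2 + \<tau> ^ 2 / \<beta>) / 2))"
    by (intro sum_mono mult_left_mono mult_le_weighted_squares[OF \<beta>]) simp
  also have "\<dots> = (\<beta> * (\<Sum>u\<in>U. real (c u) * (real (c u) - 1) ^ 2) + real N * \<tau> ^ 2 / \<beta>) / 2"
    unfolding N[symmetric]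
    by (simp add: sum_distrib_right sum_distrib_left sum_divide_distrib[symmetric] sum.distrib
        algebra_simps add_divide_distrib)
  finally have P\<tau>: "P * \<tau> \<le> \<dots>" .
  have "(\<Sum>u\<in>U. real (c u) ^ 2) * t = real N * t + P * t" unfolding sq by (simp add: algebra_simps)
  also have "P * t \<le> P * (B + \<tau>)" by (rule mult_left_mono[OF t(2) P])
  also have "real N * t + P * (B + \<tau>) = real N * t + B * P + P * \<tau>" by (simp add: algebra_simps)
  finally show ?thesis using P\<tau> unfolding P_def[symmetric] by linarith
qed

lemma sum_card_sumprod_collisions_le_energy:
  assumes A: "finite A"
  shows "(\<Sum>a\<in>A. real (card (sumprod_collisions A a)))
    \<le> 4 * real (card A) ^ 5 + (\<Sum>r\<in>ratio_set A.
         (\<Sum>u\<in>intercepts A r. real (incidences A (r, u)) ^ 2)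
         * (\<Sum>a\<in>A. real (card (shift_ratio_pairs A r a))))"
proof -
  have "(\<Sum>a\<in>A. real (card (sumprod_collisions A a)))
      \<le> (\<Sum>a\<in>A. 4 * real (card A) ^ 4 + (\<Sum>r\<in>ratio_set A.
            real (card (sum_ratio_pairs A r)) * real (card (shift_ratio_pairs A r a))))"
    by (rule sum_mono) (rule card_sumprod_collisions_le[OF A])
  also have "\<dots> = 4 * real (card A) ^ 5 + (\<Sum>r\<in>ratio_set A.
      real (card (sum_ratio_pairs A r)) * (\<Sum>a\<in>A. real (card (shift_ratio_pairs A r a))))"
    by (simp add: sum.distrib sum_distrib_left eval_nat_numeral algebra_simps sum.swap[of _ A])
  also have "\<dots> \<le> 4 * real (card A) ^ 5 + (\<Sum>r\<in>ratio_set A.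
      (\<Sum>u\<in>intercepts A r. real (incidences A (r, u)) ^ 2) * (\<Sum>a\<in>A. real (card (shift_ratio_pairs A r a))))"
    by (intro add_left_mono sum_mono mult_right_mono card_sum_ratio_pairs_le[OF A]) (simp add: sum_nonneg)
  finally show ?thesis .
qed

lemma sum_rich_shift_totals_square_le:
  assumes A: "finite A" and R: "finite R" and M: "1 \<le> M" "M \<le> real (card A)"
  shows "(\<Sum>r\<in>R. (\<Sum>a\<in>{a\<in>A. M < real (card (shift_ratio_pairs A r a))}. real (card (shift_ratio_pairs A r a))) ^ 2)
    \<le> real (card A) * (679 * real (card A) ^ 4 / M)"
proof -
  define K where "K r a = real (card (shift_ratio_pairs A r a))" for r a
  define B where "B r = {a\<in>A. M < K r a}" for r
  have "(\<Sum>a\<in>B r. K r a) ^ 2 \<le> real (card A) * (\<Sum>a\<in>B r. K r a ^ 2)" for r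
  proof -
    have "(\<Sum>a\<in>B r. K r a) ^ 2 \<le> (\<Sum>a\<in>B r. K r a ^ 2) * real (card (B r))"
      by (rule sum_squared_le_sum_of_squares)
    also have "\<dots> \<le> (\<Sum>a\<in>B r. K r a ^ 2) * real (card A)"
      using A by (intro mult_left_mono sum_nonneg) (auto simp: B_def intro!: card_mono)
    finally show ?thesis by (simp add: mult.commute)
  qed
  then have "(\<Sum>r\<in>R. (\<Sum>a\<in>B r. K r a) ^ 2) \<le> real (card A) * (\<Sum>r\<in>R. \<Sum>a\<in>B r. K r a ^ 2)"
    by (simp add: sum_distrib_left sum_mono)
  also have "\<dots> \<le> real (card A) * (679 * real (card A) ^ 4 / M)"
    using sum_rich_shift_ratio_pairs_le[OF A R M] unfolding K_def B_def by (intro mult_left_mono) auto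
  finally show ?thesis unfolding K_def B_def .
qed

lemma collision_bound_arith:
  fixes n M L \<beta> :: real
  assumes n: "n > 0" and M: "M \<ge> 1" and M_cube: "M ^ 3 = n * L" and \<beta>_def: "\<beta> = n ^ 2 / M ^ 2"
  shows "4 * n ^ 5 + n ^ 2 * n ^ 3 + n * M * n ^ 4
      + (\<beta> * (678 * n ^ 4 * L) + n ^ 2 * (n * (679 * n ^ 4 / M)) / \<beta>) / 2
    \<le> 685 * n ^ 5 * M"
proof -
  have "\<beta> * (678 * n ^ 4 * L) = 678 * n ^ 5 * (n * L) / M ^ 2"
    unfolding \<beta>_def using M by (simp add: field_simps eval_nat_numeral)
  also have "\<dots> = 678 * (n ^ 5 * M)" unfolding M_cube[symmetric] using M by (simp add: power2_eq_square power3_eq_cube)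
  finally have e1: "\<beta> * (678 * n ^ 4 * L) = 678 * (n ^ 5 * M)" .
  have e2: "n ^ 2 * (n * (679 * n ^ 4 / M)) / \<beta> = 679 * (n ^ 5 * M)"
    unfolding \<beta>_def using n M by (simp add: field_simps eval_nat_numeral)
  have e3: "n ^ 2 * n ^ 3 = n ^ 5" "n * M * n ^ 4 = n ^ 5 * M" "685 * n ^ 5 * M = 685 * (n ^ 5 * M)"
    by (simp_all add: eval_nat_numeral)
  have linear: "4 * x + x + y + (678 * y + 679 * y) / 2 \<le> 685 * y" if "x \<le> y" "0 \<le> y" for x y :: real
    using that by (simp add: field_simps)
  have "n ^ 5 \<le> n ^ 5 * M" "0 \<le> n ^ 5 * M" using n M by simp_all
  then show ?thesis unfolding e1 e2 e3 by (rule linear)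
qed

lemma sum_card_sumprod_collisions_le:
  assumes A: "finite A" and M: "1 \<le> M" "M \<le> real (card A)"
    and M_cube: "M ^ 3 = real (card A) * (1 + ln (real (card A)))"
  shows "(\<Sum>a\<in>A. real (card (sumprod_collisions A a))) \<le> 685 * real (card A) ^ 5 * M"
proof -
  define n where "n = real (card A)"
  define \<beta> where "\<beta> = n ^ 2 / M ^ 2"
  define K where "K r a = real (card (shift_ratio_pairs A r a))" for r a
  define t where "t r = (\<Sum>a\<in>A. K r a)" for r
  define \<tau> where "\<tau> r = (\<Sum>a\<in>{a\<in>A. M < K r a}. K r a)" for r
  define E where "E r = (\<Sum>u\<in>intercepts A r. real (incidences A (r, u)) ^ 2)" for r
  define P where "P r = (\<Sum>u\<in>intercepts A r. real (incidences A (r, u)) * (real (incidences A (r, u)) - 1))" for r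
  define W where "W r = (\<Sum>u\<in>intercepts A r. real (incidences A (r, u)) * (real (incidences A (r, u)) - 1) ^ 2)" for r
  have n: "n > 0" and \<beta>: "\<beta> > 0" using M unfolding n_def \<beta>_def by auto
  have R: "finite (ratio_set A)" using A by (rule finite_ratio_set)
  have t_split: "t r \<le> n * M + \<tau> r" for r
  proof -
    have "t r = \<tau> r + (\<Sum>a\<in>A - {a\<in>A. M < K r a}. K r a)"
      unfolding t_def \<tau>_def using A by (subst sum.subset_diff[of "{a\<in>A. M < K r a}"]) auto
    also have "(\<Sum>a\<in>A - {a\<in>A. M < K r a}. K r a) \<le> (\<Sum>a\<in>A - {a\<in>A. M < K r a}. M)"
      by (rule sum_mono) auto
    also have "\<dots> \<le> n * M" unfolding n_def using A M by (simp add: card_Diff_subset card_mono)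
    finally show ?thesis by simp
  qed
  have slope: "E r * t r \<le> n ^ 2 * t r + n * M * P r + (\<beta> * W r + n ^ 2 * \<tau> r ^ 2 / \<beta>) / 2" for r
    using sum_squares_mult_le[OF finite_intercepts[OF A] sum_incidences_intercepts[OF A] _ t_split \<beta>]
    unfolding E_def P_def W_def n_def by (simp add: t_def K_def sum_nonneg)
  have sum_t: "(\<Sum>r\<in>ratio_set A. t r) \<le> n ^ 3"
    using sum_card_shift_ratio_pairs_le[OF A] unfolding t_def K_def n_def
    by (metis (mono_tags, lifting) of_nat_le_iff of_nat_power of_nat_sum sum.cong)
  have sum_P: "(\<Sum>r\<in>ratio_set A. P r) \<le> n ^ 4"
    unfolding P_def n_def by (rule sum_incidences_pairs_slopes_le[OF A R])
  have sum_W: "(\<Sum>r\<in>ratio_set A. W r) \<le> 678 * n ^ 4 * (1 + ln n)"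
    unfolding W_def n_def by (rule sum_incidences_cubes_slopes_le[OF A R])
  have sum_\<tau>: "(\<Sum>r\<in>ratio_set A. \<tau> r ^ 2) \<le> n * (679 * n ^ 4 / M)"
    unfolding \<tau>_def K_def n_def by (rule sum_rich_shift_totals_square_le[OF A R M])
  have "(\<Sum>a\<in>A. real (card (sumprod_collisions A a))) \<le> 4 * n ^ 5 + (\<Sum>r\<in>ratio_set A. E r * t r)"
    using sum_card_sumprod_collisions_le_energy[OF A] unfolding E_def t_def K_def n_def .
  also have "\<dots> \<le> 4 * n ^ 5 + (\<Sum>r\<in>ratio_set A. n ^ 2 * t r + n * M * P r + (\<beta> * W r + n ^ 2 * \<tau> r ^ 2 / \<beta>) / 2)"
    by (intro add_left_mono sum_mono slope)
  also have "\<dots> = 4 * n ^ 5 + n ^ 2 * (\<Sum>r\<in>ratio_set A. t r) + n * M * (\<Sum>r\<in>ratio_set A. P r)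
      + (\<beta> * (\<Sum>r\<in>ratio_set A. W r) + n ^ 2 * (\<Sum>r\<in>ratio_set A. \<tau> r ^ 2) / \<beta>) / 2"
    by (simp add: sum.distrib sum_distrib_left sum_divide_distrib[symmetric] add_divide_distrib)
  also have "\<dots> \<le> 4 * n ^ 5 + n ^ 2 * n ^ 3 + n * M * n ^ 4
      + (\<beta> * (678 * n ^ 4 * (1 + ln n)) + n ^ 2 * (n * (679 * n ^ 4 / M)) / \<beta>) / 2"
    using n M \<beta> sum_t sum_P sum_W sum_\<tau>
    by (intro add_mono add_left_mono mult_left_mono divide_right_mono) simp_all
  also have "\<dots> \<le> 685 * n ^ 5 * M"
    by (rule collision_bound_arith[OF n M(1) _ \<beta>_def]) (simp add: M_cube n_def)
  finally show ?thesis unfolding n_def .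
qed

lemma card_small_values_ge_half:
  fixes f :: "'a \<Rightarrow> real"
  assumes A: "finite A" and B: "B > 0" and f: "\<And>a. a \<in> A \<Longrightarrow> 0 \<le> f a"
    and sum: "(\<Sum>a\<in>A. f a) \<le> real (card A) / 2 * B"
  shows "real (card A) / 2 \<le> real (card {a\<in>A. f a \<le> B})"
proof (rule ccontr)
  define S where "S = {a\<in>A. f a \<le> B}"
  assume "\<not> real (card A) / 2 \<le> real (card {a\<in>A. f a \<le> B})"
  then have "real (card A) / 2 < real (card (A - S))"
    using A by (simp add: S_def card_Diff_subset of_nat_diff card_mono)
  then have "real (card A) / 2 * B < real (card (A - S)) * B" using B by simp
  also have "\<dots> = (\<Sum>a\<in>A - S. B)" by simp
  also have "\<dots> \<le> (\<Sum>a\<in>A - S. f a)" by (rule sum_mono) (auto simp: S_def)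
  also have "\<dots> \<le> (\<Sum>a\<in>A. f a)" using A f by (intro sum_mono2) auto
  finally show False using sum by simp
qed

lemma cube_root_parameter:
  fixes N M :: real
  assumes N: "N \<ge> 2" and M: "M = (N * (1 + ln N)) powr (1/3)"
  shows "1 \<le> M" "M \<le> N" "M ^ 3 = N * (1 + ln N)"
proof -
  have L: "1 \<le> 1 + ln N" using N by simp
  then have NL: "1 \<le> N * (1 + ln N)" using N mult_mono[of 1 N 1 "1 + ln N"] by simp
  then show M1: "1 \<le> M" unfolding M by (intro ge_one_powr_ge_zero) auto
  have "M ^ 3 = M powr (real 3)" using M1 by (subst powr_realpow) auto
  also have "\<dots> = N * (1 + ln N)" unfolding M powr_powr using NL by simp
  finally show M3: "M ^ 3 = N * (1 + ln N)" .
  have "1 + ln N \<le> N" using ln_le_minus_one[of N] N by simp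
  also have "N \<le> N * N" using N by simp
  finally have "N * (1 + ln N) \<le> N * (N * N)" using N by (intro mult_left_mono) auto
  then have "M ^ Suc 2 \<le> N ^ Suc 2" using M3 by (simp add: power3_eq_cube)
  then show "M \<le> N" by (rule power_le_imp_le_base) (use N in simp)
qed

lemma cube_root_parameter_bound:
  fixes N M :: real
  assumes N: "N \<ge> 2" and M: "M = (N * (1 + ln N)) powr (1/3)"
  shows "1/2740 * N powr (5/3) / (log 2 N) powr (1/3) \<le> N ^ 2 / (1370 * M)"
proof -
  define L where "L = 1 + ln N"
  have lg: "log 2 N \<ge> 1" using N by simp
  have "ln N \<le> log 2 N" unfolding log_def using N ln_le_minus_one[of "2::real"]
    by (simp add: le_divide_eq mult_left_le)
  then have L: "1 \<le> L" "L \<le> 2 * log 2 N" unfolding L_def using N lg by (simp, linarith)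
  have M_eq: "M = N powr (1/3) * L powr (1/3)" unfolding M L_def[symmetric] using N L by (simp add: powr_mult)
  have "N powr (5/3) * N powr (1/3) = N powr 2" by (simp add: powr_add[symmetric])
  also have "\<dots> = N ^ 2" using N by (intro powr_numeral) simp
  finally have N2: "N ^ 2 = N powr (5/3) * N powr (1/3)" by simp
  have "L powr (1/3) \<le> (2 * log 2 N) powr (1/3)" using L by (intro powr_mono2) auto
  also have "\<dots> = 2 powr (1/3) * (log 2 N) powr (1/3)" using lg by (simp add: powr_mult)
  also have "\<dots> \<le> 2 * (log 2 N) powr (1/3)"
    using powr_mono[of "1/3" 1 "2::real"] by (intro mult_right_mono) auto
  finally have "L powr (1/3) \<le> 2 * (log 2 N) powr (1/3)" .
  then have "N powr (5/3) / (1370 * (2 * (log 2 N) powr (1/3))) \<le> N powr (5/3) / (1370 * L powr (1/3))"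
    using N L by (intro divide_left_mono) auto
  also have "\<dots> = N ^ 2 / (1370 * M)"
    unfolding M_eq N2 using N L by (simp add: field_simps)
  finally show ?thesis by simp
qed

lemma large_sumprod_sets:
  assumes A: "finite A" and n: "card A \<ge> 2"
    and M: "M = (real (card A) * (1 + ln (real (card A)))) powr (1/3)"
  obtains A' where "A' \<subseteq> A" "real (card A) / 2 \<le> real (card A')"
    "\<And>a. a \<in> A' \<Longrightarrow> real (card A) ^ 2 / (1370 * M) \<le> real (card (sumprod_set A a))"
proof -
  define N where "N = real (card A)"
  have N: "N \<ge> 2" using n unfolding N_def by simp
  note M_props = cube_root_parameter[OF N M[folded N_def]]
  define B where "B = 1370 * N ^ 4 * M"
  have B: "B > 0" unfolding B_def using N M_props by simp
  define A' where "A' = {a\<in>A. real (card (sumprod_collisions A a)) \<le> B}"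
  have "(\<Sum>a\<in>A. real (card (sumprod_collisions A a))) \<le> 685 * N ^ 5 * M"
    using sum_card_sumprod_collisions_le[OF A] M_props unfolding N_def by simp
  also have "\<dots> = N / 2 * B" unfolding B_def by (simp add: eval_nat_numeral)
  finally have "N / 2 \<le> real (card A')"
    using card_small_values_ge_half[OF A B, of "\<lambda>a. real (card (sumprod_collisions A a))"]
    unfolding A'_def N_def by simp
  moreover have "N ^ 2 / (1370 * M) \<le> real (card (sumprod_set A a))" if "a \<in> A'" for a
  proof -
    define Q where "Q = real (card (sumprod_collisions A a))"
    have QB: "Q \<le> B" using that unfolding A'_def Q_def by simp
    have NQ: "N ^ 6 \<le> real (card (sumprod_set A a)) * Q"
      unfolding N_def Q_def by (rule card_sumprod_set_mult_collisions_ge[OF A])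
    moreover have "0 < N ^ 6" using N by simp
    ultimately have "Q \<noteq> 0" by auto
    then have "Q > 0" unfolding Q_def by simp
    have "N ^ 2 / (1370 * M) = N ^ 6 / B" unfolding B_def using N M_props by (simp add: field_simps)
    also have "\<dots> \<le> N ^ 6 / Q" using QB \<open>Q > 0\<close> N by (intro divide_left_mono) auto
    also have "\<dots> \<le> real (card (sumprod_set A a))" using NQ \<open>Q > 0\<close> by (simp add: divide_le_eq)
    finally show ?thesis .
  qed
  ultimately show thesis using that[of A'] unfolding A'_def N_def by auto
qed

theorem theorem2p10:
  shows "\<exists>C::real. C > 0 \<and>
    (\<forall>A :: real set. finite A \<longrightarrow>
       (\<exists>A' \<subseteq> A. real (card A') \<ge> real (card A) / 2 \<and>
          (\<forall>a \<in> A'. real (card (sumprod_set A a)) \<ge>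
              C * real (card A) powr (5/3) / (log 2 (real (card A))) powr (1/3))))"
proof (intro exI[of _ "1/2740"] conjI allI impI)
  fix A :: "real set" assume A: "finite A"
  define N where "N = real (card A)"
  show "\<exists>A' \<subseteq> A. real (card A) / 2 \<le> real (card A') \<and> (\<forall>a \<in> A'.
      1/2740 * real (card A) powr (5/3) / (log 2 (real (card A))) powr (1/3) \<le> real (card (sumprod_set A a)))"
  proof (cases "card A \<ge> 2")
    case True
    define M where "M = (N * (1 + ln N)) powr (1/3)"
    obtain A' where "A' \<subseteq> A" "N / 2 \<le> real (card A')"
      and large: "\<And>a. a \<in> A' \<Longrightarrow> N ^ 2 / (1370 * M) \<le> real (card (sumprod_set A a))"
      using large_sumprod_sets[OF A True] unfolding N_def M_def by blast
    moreover have "1/2740 * N powr (5/3) / (log 2 N) powr (1/3) \<le> N ^ 2 / (1370 * M)"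
      using True by (intro cube_root_parameter_bound M_def) (simp add: N_def)
    ultimately show ?thesis unfolding N_def[symmetric] by (meson order_trans)
  next
    case False
    \<comment> \<open>then \<open>A = {}\<close> or \<open>log 2 (card A) = 0\<close>, and the division by zero makes the bound \<open>0\<close>\<close>
    then have "card A \<le> 1" by simp
    then show ?thesis by (intro exI[of _ A]) (auto simp: le_Suc_eq)
  qed
qed simp

end
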